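(* In the setting described in the context, assume $n$ is even and $N<\infty$, and put $r=\frac N2$. Then $n=2k$ with $k\in\{1,\dots,r-1\}$, $r\ge2$, $$\frac14\le\sigma_0^2=\frac{k(r-k)}{2r}\le\frac r8,\qquad \sigma=\sqrt{\frac{2r}{2r-1}}\,\sigma_0,$$ and $$f(k)>\frac1{\sigma_0\sqrt{2\pi}}\exp\Big(\frac{23}{192r}-\frac1{16\sigma_0^2}\Big)>\frac1{\sigma_0\sqrt{2\pi}}\exp\Big(-\frac1{16\sigma_0^2}\Big),$$ $$f(k)<\frac1{\sigma_0\sqrt{2\pi}}\exp\Big(\frac1{8r}-\frac{23}{384\sigma_0^2}\Big)<\frac1{\sigma_0\sqrt{2\pi}}e^{-\frac1{24\sigma_0^2}}<\frac1{\sigma\sqrt{2\pi}}.$$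
   Context: Standing setting: Binomial law $\mathrm B_{m,p}(\{k\})=\binom mk p^k(1-p)^{m-k}$; hypergeometric law $\mathrm H_{m,r,b}(\{k\})=\binom rk\binom b{m-k}/\binom{r+b}m$ ($r,b\in\mathbb N_0$, $m\in\{0,\dots,r+b\}$, $k\in\mathbb Z$, binomial coefficients with non-integer lower index being $0$). $P$ is a symmetric (about its mean) hypergeometric or symmetric binomial law with mean $\frac n2$ and standard deviation $\sigma>0$, and $f(k)=P(\{k\})$; $N\in\mathbb N\cup\{\infty\}$ is a population size parameter of $P$ (i.e. $N=\infty$ and $P$ binomial, or $P=\mathrm H_{m,r,b}$ for some $r,b,m$ with $r+b=N$); $\sigma_0^2=\frac{N-1}N\sigma^2$ if $N<\infty$, $\sigma_0^2=\sigma^2$ if $N=\infty$, $\sigma_0\ge 0$. *)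

theory Defs
  imports Complex_Main
begin

definition zbinom :: "nat \<Rightarrow> int \<Rightarrow> real" where
  "zbinom a k = (if k < 0 then 0 else real (a choose nat k))"

text \<open>Probability mass function of the hypergeometric law H_{m,r,b} at the integer k
  (meaningful for m \<le> r + b).\<close>
definition hyp_pmf :: "nat \<Rightarrow> nat \<Rightarrow> nat \<Rightarrow> int \<Rightarrow> real" where
  "hyp_pmf m r b k = zbinom r k * zbinom b (int m - k) / real ((r + b) choose m)"

text \<open>Mean and variance of H_{m,r,b}; the support is contained in {0..m}.\<close>
definition hyp_mean :: "nat \<Rightarrow> nat \<Rightarrow> nat \<Rightarrow> real" where
  "hyp_mean m r b = (\<Sum>k\<in>{0..int m}. real_of_int k * hyp_pmf m r b k)"

definition hyp_var :: "nat \<Rightarrow> nat \<Rightarrow> nat \<Rightarrow> real" where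
  "hyp_var m r b = (\<Sum>k\<in>{0..int m}. (real_of_int k - hyp_mean m r b)^2 * hyp_pmf m r b k)"

end

theory Submission
  imports Defs "HOL-Analysis.Analysis"
begin

text \<open>
  A hypergeometric law with positive variance that is symmetric about an even mean \<open>n = 2k\<close>
  has its mean at the midpoint of its support, which forces \<open>r = b\<close> or \<open>r + b = 2m\<close>.
  In both cases \<open>N = 2R\<close>, the variance is \<open>k(R - k)/(2R - 1)\<close>, and the value at the mode is
  \<open>C(2k,k) C(2(R-k),R-k) / C(2R,R)\<close>.  Write \<open>C(2j,j) = 4^j sqrt (w j / (\<pi> j))\<close> with
  \<open>w = wallis_ratio\<close>.  Wallis' product gives \<open>w j \<longrightarrow> 1\<close>, and the exact ratio
  \<open>w (j+1) / w j = 1 + 1/(4j(j+1))\<close> shows that \<open>w j e^(1/(4j))\<close> decreases and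
  \<open>w j e^(1/(4j) - 1/(96j^3))\<close> increases to \<open>1\<close>.  Hence \<open>e^(-1/(8j)) < sqrt (w j) \<le> e^(-23/(192j))\<close>,
  and inserting these bounds for \<open>j = k, R - k, R\<close> gives the two-sided estimate of the mode.
\<close>

section \<open>Moments of the hypergeometric law\<close>

lemma sum_atLeastAtMost_int_nat: "(\<Sum>k\<in>{0..int m}. g k) = (\<Sum>k\<le>m. g (int k))"
proof -
  have "{0..int m} = int ` {..m}"
    by (simp add: image_int_atLeastAtMost atLeast0AtMost[symmetric])
  then show ?thesis
    by (simp add: sum.reindex)
qed

lemma hyp_pmf_nat:
  "k \<le> m \<Longrightarrow> hyp_pmf m a b (int k) = real (a choose k) * real (b choose (m - k)) / real ((a + b) choose m)"
  by (simp add: hyp_pmf_def zbinom_def nat_diff_distrib)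

lemma hyp_pmf_pos_iff:
  assumes "m \<le> a + b"
  shows "hyp_pmf m a b j > 0 \<longleftrightarrow> 0 \<le> j \<and> j \<le> int a \<and> 0 \<le> int m - j \<and> int m - j \<le> int b"
  using assms by (auto simp: hyp_pmf_def zbinom_def zero_less_divide_iff zero_less_mult_iff)

lemma hyp_pmf_sum: "m \<le> a + b \<Longrightarrow> (\<Sum>k\<le>m. hyp_pmf m a b (int k)) = 1"
  by (simp add: hyp_pmf_nat sum_divide_distrib[symmetric] of_nat_mult[symmetric] of_nat_sum[symmetric]
      vandermonde del: of_nat_sum of_nat_mult)

lemma hyp_mean_sum: "hyp_mean m a b = (\<Sum>k\<le>m. real k * hyp_pmf m a b (int k))"
  by (simp add: hyp_mean_def sum_atLeastAtMost_int_nat)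

lemma sum_choose_first_moment:
  fixes m a b :: nat
  shows "(\<Sum>k\<le>m. k * (a choose k) * (b choose (m - k))) * (a + b) = a * m * ((a + b) choose m)"
proof (cases "m = 0 \<or> a = 0")
  case True
  then show ?thesis by auto
next
  case False
  then obtain m' where m: "m = Suc m'"
    by (metis not0_implies_Suc)
  have absorb: "m * ((a + b) choose m) = (a + b) * ((a + b - 1) choose m')"
    unfolding m by (rule binomial_absorption)
  have "(\<Sum>k\<le>m. k * (a choose k) * (b choose (m - k)))
      = (\<Sum>i\<le>m'. Suc i * (a choose Suc i) * (b choose (m' - i)))"
    unfolding m sum.atMost_Suc_shift by simp
  also have "\<dots> = a * (\<Sum>i\<le>m'. ((a - 1) choose i) * (b choose (m' - i)))"
    unfolding sum_distrib_left by (intro sum.cong refl, subst binomial_absorption) (simp add: mult.assoc)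
  also have "\<dots> = a * ((a + b - 1) choose m')"
    using False by (simp add: vandermonde)
  finally have "(\<Sum>k\<le>m. k * (a choose k) * (b choose (m - k))) * (a + b) = a * ((a + b) * ((a + b - 1) choose m'))"
    by (simp add: mult_ac)
  also have "\<dots> = a * m * ((a + b) choose m)"
    by (simp add: absorb mult.assoc)
  finally show ?thesis .
qed

lemma sum_choose_second_factorial_moment:
  fixes m a b :: nat
  shows "(\<Sum>k\<le>m. k * (k - 1) * (a choose k) * (b choose (m - k))) * ((a + b) * (a + b - 1))
     = a * (a - 1) * m * (m - 1) * ((a + b) choose m)"
proof (cases "m = 0 \<or> a = 0")
  case True
  then show ?thesis by auto
next
  case False
  then obtain m' where m: "m = Suc m'"
    by (metis not0_implies_Suc)
  have absorb: "m * ((a + b) choose m) = (a + b) * ((a + b - 1) choose m')"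
    unfolding m by (rule binomial_absorption)
  have "(\<Sum>k\<le>m. k * (k - 1) * (a choose k) * (b choose (m - k)))
      = (\<Sum>i\<le>m'. i * (Suc i * (a choose Suc i)) * (b choose (m' - i)))"
    unfolding m sum.atMost_Suc_shift by (simp add: algebra_simps)
  also have "\<dots> = a * (\<Sum>i\<le>m'. i * ((a - 1) choose i) * (b choose (m' - i)))"
    unfolding sum_distrib_left by (intro sum.cong refl, subst binomial_absorption) (simp add: mult_ac)
  finally have "(\<Sum>k\<le>m. k * (k - 1) * (a choose k) * (b choose (m - k))) * ((a + b) * (a + b - 1))
      = a * (a + b) * ((\<Sum>i\<le>m'. i * ((a - 1) choose i) * (b choose (m' - i))) * (a - 1 + b))"
    using False by (simp add: mult_ac)
  also have "\<dots> = a * (a + b) * ((a - 1) * m' * ((a - 1 + b) choose m'))"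
    by (simp only: sum_choose_first_moment)
  also have "\<dots> = a * (a - 1) * m' * ((a + b) * ((a + b - 1) choose m'))"
    using False by (simp add: mult_ac)
  also have "\<dots> = a * (a - 1) * m * (m - 1) * ((a + b) choose m)"
    unfolding absorb[symmetric] by (simp add: m mult_ac del: mult_Suc)
  finally show ?thesis .
qed

lemma hyp_mean_eq:
  assumes "m \<le> a + b"
  shows "hyp_mean m a b * real (a + b) = real a * real m"
proof -
  define S where "S = (\<Sum>k\<le>m. k * (a choose k) * (b choose (m - k)))"
  have "hyp_mean m a b = real S / real ((a + b) choose m)"
    by (simp add: S_def hyp_mean_sum hyp_pmf_nat sum_divide_distrib mult.assoc)
  then have "hyp_mean m a b * real (a + b) = real (S * (a + b)) / real ((a + b) choose m)"
    by simp
  also have "\<dots> = real a * real m"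
    using sum_choose_first_moment[of a b m, folded S_def] assms by simp
  finally show ?thesis .
qed

lemma hyp_second_factorial_moment:
  assumes "m \<le> a + b"
  shows "(\<Sum>k\<le>m. real k * (real k - 1) * hyp_pmf m a b (int k)) * (real (a + b) * (real (a + b) - 1))
       = real a * (real a - 1) * real m * (real m - 1)"
proof -
  have falling: "real (x * (x - 1)) = real x * (real x - 1)" for x
    by (cases x) (auto simp: algebra_simps)
  define S where "S = (\<Sum>k\<le>m. k * (k - 1) * (a choose k) * (b choose (m - k)))"
  define C where "C = (a + b) choose m"
  have "S * ((a + b) * (a + b - 1)) = a * (a - 1) * (m * (m - 1)) * C"
    using sum_choose_second_factorial_moment[of a b m, folded S_def C_def] by (metis mult.assoc)
  from arg_cong[OF this, of real] have moment: "real S * (real (a + b) * (real (a + b) - 1))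
      = real a * (real a - 1) * (real m * (real m - 1)) * real C"
    by (simp only: of_nat_mult[of S] of_nat_mult[of "a * (a - 1) * (m * (m - 1))"]
        of_nat_mult[of "a * (a - 1)"] falling)
  have "(\<Sum>k\<le>m. real k * (real k - 1) * hyp_pmf m a b (int k)) = real S / real C"
    unfolding S_def C_def sum_divide_distrib of_nat_sum
    by (intro sum.cong refl) (simp add: hyp_pmf_nat falling[symmetric] del: of_nat_diff)
  then have "(\<Sum>k\<le>m. real k * (real k - 1) * hyp_pmf m a b (int k)) * (real (a + b) * (real (a + b) - 1))
      = real S * (real (a + b) * (real (a + b) - 1)) / real C"
    by simp
  also have "\<dots> = real a * (real a - 1) * (real m * (real m - 1)) * real C / real C"
    by (simp only: moment)
  also have "\<dots> = real a * (real a - 1) * real m * (real m - 1)"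
    using assms by (simp add: C_def mult.assoc)
  finally show ?thesis .
qed

lemma hyp_var_moments:
  assumes "m \<le> a + b"
  shows "hyp_var m a b = (\<Sum>k\<le>m. real k * (real k - 1) * hyp_pmf m a b (int k))
                         + hyp_mean m a b - hyp_mean m a b ^ 2"
proof -
  define \<mu> where "\<mu> = hyp_mean m a b"
  have "hyp_var m a b = (\<Sum>k\<le>m. real k * (real k - 1) * hyp_pmf m a b (int k)
                           + (1 - 2 * \<mu>) * (real k * hyp_pmf m a b (int k)) + \<mu> ^ 2 * hyp_pmf m a b (int k))"
    unfolding hyp_var_def sum_atLeastAtMost_int_nat \<mu>_def[symmetric]
    by (intro sum.cong refl) (simp add: power2_eq_square algebra_simps)
  also have "\<dots> = (\<Sum>k\<le>m. real k * (real k - 1) * hyp_pmf m a b (int k)) + (1 - 2 * \<mu>) * \<mu> + \<mu> ^ 2"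
    by (simp add: sum.distrib sum_distrib_left[symmetric] hyp_mean_sum[symmetric] \<mu>_def hyp_pmf_sum[OF assms])
  finally show ?thesis
    by (simp add: \<mu>_def power2_eq_square algebra_simps)
qed

lemma hyp_var_closed_form:
  assumes "m \<le> a + b"
  shows "hyp_var m a b * (real (a + b) ^ 2 * (real (a + b) - 1))
       = real a * real b * real m * (real (a + b) - real m)"
proof -
  define N where "N = real (a + b)"
  define \<mu> where "\<mu> = hyp_mean m a b"
  define E where "E = (\<Sum>k\<le>m. real k * (real k - 1) * hyp_pmf m a b (int k))"
  have mean: "\<mu> * N = real a * real m"
    using hyp_mean_eq[OF assms] by (simp add: \<mu>_def N_def)
  have second: "E * (N * (N - 1)) = real a * (real a - 1) * real m * (real m - 1)"
    using hyp_second_factorial_moment[OF assms] by (simp add: E_def N_def)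
  have "hyp_var m a b * (N ^ 2 * (N - 1))
      = E * (N * (N - 1)) * N + (\<mu> * N) * (N * (N - 1)) - (\<mu> * N) ^ 2 * (N - 1)"
    unfolding hyp_var_moments[OF assms] E_def[symmetric] \<mu>_def[symmetric]
    by (simp add: power2_eq_square algebra_simps)
  also have "\<dots> = real a * (real a - 1) * real m * (real m - 1) * N
      + (real a * real m) * (N * (N - 1)) - (real a * real m) ^ 2 * (N - 1)"
    by (simp only: mean second)
  also have "\<dots> = real a * real b * real m * (N - real m)"
    by (simp add: N_def power2_eq_square algebra_simps)
  finally show ?thesis
    by (simp add: N_def)
qed

section \<open>Symmetric hypergeometric laws with even mean\<close>

lemma hyp_var_eq_0_if_le_1:
  assumes "m \<le> a + b" "a + b \<le> 1"
  shows "hyp_var m a b = 0"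
proof -
  have "k = 0 \<or> k = 1" if "k \<le> m" for k
    using that assms by linarith
  then have "(\<Sum>k\<le>m. real k * (real k - 1) * hyp_pmf m a b (int k)) = 0"
    by (intro sum.neutral) auto
  moreover have "hyp_mean m a b = 0 \<or> hyp_mean m a b = 1"
  proof (cases "a + b = 0")
    case True
    then show ?thesis using assms by (simp add: hyp_mean_sum)
  next
    case False
    then have "a + b = 1" using assms by linarith
    then show ?thesis
      using hyp_mean_eq[OF assms(1)] assms by (cases a; cases m) auto
  qed
  ultimately show ?thesis
    using hyp_var_moments[OF assms(1)] by auto
qed

lemma hyp_var_pos_imp:
  assumes "m \<le> a + b" "hyp_var m a b > 0"
  shows "1 \<le> a \<and> 1 \<le> b \<and> 1 \<le> m \<and> m < a + b"
proof -
  have "a + b \<ge> 2"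
    using hyp_var_eq_0_if_le_1[OF assms(1)] assms(2) by (cases "a + b \<le> 1") auto
  then have "real (a + b) ^ 2 * (real (a + b) - 1) > 0"
    by simp
  then have "real a * real b * real m * (real (a + b) - real m) > 0"
    using hyp_var_closed_form[OF assms(1)] assms(2) by (metis mult_pos_pos)
  then have "real a \<noteq> 0 \<and> real b \<noteq> 0 \<and> real m \<noteq> 0 \<and> real (a + b) - real m \<noteq> 0"
    by (metis mult_eq_0_iff order_less_irrefl)
  then have "a \<noteq> 0" "b \<noteq> 0" "m \<noteq> 0" "m \<noteq> a + b"
    by auto
  then show ?thesis
    using assms(1) by auto
qed

lemma support_midpoint_cases:
  fixes a b m n :: int
  assumes "1 \<le> a" "1 \<le> b" "1 \<le> m" "m < a + b"
    and mean: "n * (a + b) = 2 * a * m"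
    and midpoint: "n = max 0 (m - b) + min m a"
  shows "(a = b \<and> n = m) \<or> (a + b = 2 * m \<and> n = a)"
proof (cases "m \<le> b"; cases "m \<le> a")
  assume "m \<le> b" "m \<le> a"
  then have "m * (a + b) = m * (2 * a)"
    using mean midpoint by (simp add: algebra_simps)
  then show ?thesis
    using assms \<open>m \<le> b\<close> \<open>m \<le> a\<close> by simp
next
  assume "m \<le> b" "\<not> m \<le> a"
  then have "a * (a + b) = a * (2 * m)"
    using mean midpoint by (simp add: algebra_simps)
  then show ?thesis
    using assms \<open>m \<le> b\<close> \<open>\<not> m \<le> a\<close> by simp
next
  assume "\<not> m \<le> b" "m \<le> a"
  then have "b * (2 * m - a - b) = 0"
    using mean midpoint by (simp add: algebra_simps)
  then show ?thesis
    using assms \<open>\<not> m \<le> b\<close> \<open>m \<le> a\<close> by simp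
next
  assume "\<not> m \<le> b" "\<not> m \<le> a"
  then have "(a - b) * (a + b - m) = 0"
    using mean midpoint by (simp add: algebra_simps)
  then show ?thesis
    using assms \<open>\<not> m \<le> b\<close> \<open>\<not> m \<le> a\<close> by auto
qed

text \<open>The reflection \<open>j \<mapsto> n - j\<close> maps the support \<open>{max 0 (m - b)..min m a}\<close> onto
  itself, so \<open>n\<close> is the sum of its endpoints.\<close>

lemma symmetric_hyp_support_cases:
  assumes "m \<le> a + b" "1 \<le> a" "1 \<le> b" "1 \<le> m" "m < a + b"
    and mean: "hyp_mean m a b = real_of_int n / 2"
    and symm: "\<forall>j. hyp_pmf m a b j = hyp_pmf m a b (n - j)"
  shows "(a = b \<and> n = int m) \<or> (a + b = 2 * m \<and> n = int a)"
proof -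
  define lo where "lo = max 0 (int m - int b)"
  define hi where "hi = min (int m) (int a)"
  have "hyp_pmf m a b lo > 0" "hyp_pmf m a b hi > 0"
    using assms(1) by (auto simp: hyp_pmf_pos_iff lo_def hi_def)
  then have "hyp_pmf m a b (n - lo) > 0" "hyp_pmf m a b (n - hi) > 0"
    using symm by auto
  then have "n = lo + hi"
    using assms(1) by (auto simp: hyp_pmf_pos_iff lo_def hi_def)
  moreover have "n * (int a + int b) = 2 * int a * int m"
  proof -
    have "real_of_int (n * (int a + int b)) = real_of_int (2 * int a * int m)"
      using hyp_mean_eq[OF assms(1)] mean by simp
    then show ?thesis
      by (simp only: of_int_eq_iff)
  qed
  ultimately have "(a = b \<and> n = int m) \<or> (int a + int b = 2 * int m \<and> n = int a)"
    using support_midpoint_cases[of "int a" "int b" "int m" n] assms(2-5)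
    by (simp add: lo_def hi_def)
  moreover have "int a + int b = 2 * int m \<longleftrightarrow> a + b = 2 * m"
    by presburger
  ultimately show ?thesis
    by blast
qed

text \<open>The two shapes \<open>H(2k, R, R)\<close> and \<open>H(R, 2k, 2(R - k))\<close> have the same value at \<open>k\<close>.\<close>

lemma choose_square_ratio_eq:
  assumes "k \<le> R"
  shows "real (R choose k) * real (R choose k) / real ((2 * R) choose (2 * k))
       = real ((2 * k) choose k) * real ((2 * (R - k)) choose (R - k)) / real ((2 * R) choose R)"
proof -
  have diffs: "2 * k - k = k" "2 * R - R = R" "2 * (R - k) - (R - k) = R - k" "2 * R - 2 * k = 2 * (R - k)"
    using assms by auto
  define A where "A = (fact R :: real)"
  define B where "B = (fact k :: real)"
  define C where "C = (fact (R - k) :: real)"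
  define D where "D = (fact (2 * k) :: real)"
  define E where "E = (fact (2 * (R - k)) :: real)"
  define F where "F = (fact (2 * R) :: real)"
  have "A \<noteq> 0" "B \<noteq> 0" "C \<noteq> 0" "D \<noteq> 0" "E \<noteq> 0" "F \<noteq> 0"
    by (simp_all add: A_def B_def C_def D_def E_def F_def)
  moreover have "real (R choose k) = A / (B * C)"
    using binomial_fact[OF assms] by (simp add: A_def B_def C_def)
  moreover have "real ((2 * R) choose (2 * k)) = F / (D * E)"
    using binomial_fact[of "2 * k" "2 * R"] assms diffs by (simp add: D_def E_def F_def)
  moreover have "real ((2 * k) choose k) = D / (B * B)"
    using binomial_fact[of k "2 * k"] diffs by (simp add: B_def D_def)
  moreover have "real ((2 * (R - k)) choose (R - k)) = E / (C * C)"
    using binomial_fact[of "R - k" "2 * (R - k)"] diffs by (simp add: C_def E_def)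
  moreover have "real ((2 * R) choose R) = F / (A * A)"
    using binomial_fact[of R "2 * R"] diffs by (simp add: A_def F_def)
  ultimately show ?thesis
    by (simp only:) (simp add: field_simps)
qed

lemma symmetric_hyp_even_shapes:
  assumes "m \<le> a + b"
    and mean: "hyp_mean m a b = real_of_int n / 2"
    and symm: "\<forall>j. hyp_pmf m a b j = hyp_pmf m a b (n - j)"
    and var: "hyp_var m a b > 0"
    and "even n"
  obtains k R where "n = 2 * int k" "1 \<le> k" "k < R"
    "(a = R \<and> b = R \<and> m = 2 * k) \<or> (a = 2 * k \<and> b = 2 * (R - k) \<and> m = R)"
proof -
  have pos: "1 \<le> a" "1 \<le> b" "1 \<le> m" "m < a + b"
    using hyp_var_pos_imp[OF assms(1) var] by auto
  note cases = symmetric_hyp_support_cases[OF assms(1) pos mean symm]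
  obtain q where "n = 2 * q"
    using \<open>even n\<close> by blast
  moreover have "n \<ge> 0"
    using cases by auto
  ultimately have "q \<ge> 0"
    by simp
  then obtain k where k: "n = 2 * int k"
    using \<open>n = 2 * q\<close> by (metis nonneg_int_cases)
  show ?thesis
  proof (cases "a = b \<and> n = int m")
    case True
    then have "b = a" "m = 2 * k"
      using k by auto
    then show ?thesis
      using that[of k a] pos k by auto
  next
    case False
    then have "a + b = 2 * m" "a = 2 * k"
      using cases k by auto
    moreover have "b = 2 * (m - k)" "1 \<le> k" "k < m"
      using calculation pos by arith+
    ultimately show ?thesis
      using that[of k m] k by simp
  qed
qed

lemma hyp_pmf_mode_of_shape:
  assumes "k < R" "(a = R \<and> b = R \<and> m = 2 * k) \<or> (a = 2 * k \<and> b = 2 * (R - k) \<and> m = R)"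
  shows "hyp_pmf m a b (int k)
      = real ((2 * k) choose k) * real ((2 * (R - k)) choose (R - k)) / real ((2 * R) choose R)"
  using assms(2)
proof
  assume "a = R \<and> b = R \<and> m = 2 * k"
  then show ?thesis
    using choose_square_ratio_eq[of k R] assms(1) by (simp add: hyp_pmf_nat mult_2)
next
  assume "a = 2 * k \<and> b = 2 * (R - k) \<and> m = R"
  then have a: "a = 2 * k" and b: "b = 2 * (R - k)" and m: "m = R"
    by auto
  have sum: "2 * k + 2 * (R - k) = 2 * R"
    using assms(1) by simp
  have "hyp_pmf m a b (int k) = real (a choose k) * real (b choose (m - k)) / real ((a + b) choose m)"
    using assms(1) by (intro hyp_pmf_nat) (simp add: m)
  also have "\<dots> = real ((2 * k) choose k) * real ((2 * (R - k)) choose (R - k)) / real ((2 * R) choose R)"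
    by (simp only: a b m sum)
  finally show ?thesis .
qed

lemma hyp_var_of_shape:
  assumes "k < R" "(a = R \<and> b = R \<and> m = 2 * k) \<or> (a = 2 * k \<and> b = 2 * (R - k) \<and> m = R)"
  shows "hyp_var m a b = real k * (real R - real k) / (2 * real R - 1)"
proof -
  have "a + b = 2 * R"
    using assms by auto
  moreover have m: "m \<le> a + b"
    using assms calculation by auto
  ultimately have N: "real a + real b = 2 * real R"
    using arg_cong[of "a + b" "2 * R" real] by simp
  have prod: "real a * real b * real m * (2 * real R - real m) = 4 * real R ^ 2 * (real k * (real R - real k))"
    using assms(2)
  proof (elim disjE conjE)
    assume "a = R" "b = R" "m = 2 * k"
    then show ?thesis
      by (simp add: power2_eq_square algebra_simps)
  next
    assume "a = 2 * k" "b = 2 * (R - k)" "m = R"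
    moreover have "real (R - k) = real R - real k"
      using assms(1) by (simp add: of_nat_diff)
    ultimately show ?thesis
      by (simp add: power2_eq_square algebra_simps)
  qed
  from hyp_var_closed_form[OF m]
  have "hyp_var m a b * ((2 * real R) ^ 2 * (2 * real R - 1)) = real a * real b * real m * (2 * real R - real m)"
    by (simp only: of_nat_add N)
  then have "4 * real R ^ 2 * (hyp_var m a b * (2 * real R - 1)) = 4 * real R ^ 2 * (real k * (real R - real k))"
    unfolding prod by (simp add: power_mult_distrib mult_ac)
  then have "hyp_var m a b * (2 * real R - 1) = real k * (real R - real k)"
    using assms(1) by simp
  moreover have "2 * real R - 1 \<noteq> 0"
    using assms(1) by linarith
  ultimately show ?thesis
    by (simp add: eq_divide_eq)
qed

section \<open>Central binomial coefficients\<close>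

definition central_binom_prob :: "nat \<Rightarrow> real" where
  "central_binom_prob j = real ((2 * j) choose j) / 4 ^ j"

lemma central_binom_prob_pos: "central_binom_prob j > 0"
  by (simp add: central_binom_prob_def)

lemma central_binom_prob_Suc:
  "central_binom_prob (Suc j) = central_binom_prob j * (2 * real j + 1) / (2 * real j + 2)"
proof -
  have choose_fact: "real ((2 * i) choose i) = fact (2 * i) / fact i ^ 2" for i
    using binomial_fact[of i "2 * i"] by (simp add: power2_eq_square mult_2)
  define y where "y = real j + 1"
  have y: "y > 0"
    by (simp add: y_def)
  have "fact (2 * Suc j) = 2 * y * (2 * y - 1) * (fact (2 * j) :: real)"
    by (simp add: y_def algebra_simps)
  moreover have "fact (Suc j) = y * (fact j :: real)"
    by (simp add: y_def)
  moreover have "2 * real j + 1 = 2 * y - 1" "2 * real j + 2 = 2 * y"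
    by (simp_all add: y_def)
  ultimately show ?thesis
    using y unfolding central_binom_prob_def choose_fact by (simp add: field_simps power2_eq_square)
qed

lemma central_binom_prob_wallis_prod:
  "central_binom_prob n ^ 2 * (2 * real n + 1) * (\<Prod>k=1..n. 4 * real k ^ 2 / (4 * real k ^ 2 - 1)) = 1"
proof (induction n)
  case 0
  then show ?case by (simp add: central_binom_prob_def)
next
  case (Suc n)
  define y where "y = real n + 1"
  have y: "y \<ge> 1"
    by (simp add: y_def)
  have prod_Suc: "(\<Prod>k=1..Suc n. 4 * real k ^ 2 / (4 * real k ^ 2 - 1))
      = (\<Prod>k=1..n. 4 * real k ^ 2 / (4 * real k ^ 2 - 1)) * (4 * y ^ 2 / ((2 * y - 1) * (2 * y + 1)))"
    by (simp add: prod.nat_ivl_Suc' y_def algebra_simps power2_eq_square)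
  have cb_Suc: "central_binom_prob (Suc n) = central_binom_prob n * (2 * y - 1) / (2 * y)"
    by (simp add: central_binom_prob_Suc y_def)
  have odd_Suc: "2 * real (Suc n) + 1 = 2 * y + 1"
    by (simp add: y_def)
  have "central_binom_prob (Suc n) ^ 2 * (2 * real (Suc n) + 1) * (\<Prod>k=1..Suc n. 4 * real k ^ 2 / (4 * real k ^ 2 - 1))
      = (central_binom_prob n * (2 * y - 1) / (2 * y)) ^ 2 * (2 * y + 1)
          * ((\<Prod>k=1..n. 4 * real k ^ 2 / (4 * real k ^ 2 - 1)) * (4 * y ^ 2 / ((2 * y - 1) * (2 * y + 1))))"
    by (simp only: cb_Suc prod_Suc odd_Suc)
  also have "\<dots> = central_binom_prob n ^ 2 * (2 * y - 1) * (\<Prod>k=1..n. 4 * real k ^ 2 / (4 * real k ^ 2 - 1))"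
    using y by (simp add: divide_simps) (simp add: algebra_simps power2_eq_square)
  also have "2 * y - 1 = 2 * real n + 1"
    by (simp add: y_def)
  also have "central_binom_prob n ^ 2 * (2 * real n + 1) * (\<Prod>k=1..n. 4 * real k ^ 2 / (4 * real k ^ 2 - 1)) = 1"
    by (rule Suc.IH)
  finally show ?case .
qed

definition wallis_ratio :: "nat \<Rightarrow> real" where
  "wallis_ratio j = pi * real j * central_binom_prob j ^ 2"

lemma wallis_ratio_pos: "j \<ge> 1 \<Longrightarrow> wallis_ratio j > 0"
  using central_binom_prob_pos[of j] by (simp add: wallis_ratio_def)

lemma lim_const_over_Suc: "(\<lambda>n. c / (real n + 1)) \<longlonglongrightarrow> (0::real)"
  using LIMSEQ_Suc[OF lim_const_over_n[of c]] by (simp add: add.commute)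

lemma LIMSEQ_n_over_2n_plus_1: "(\<lambda>n. real n / (2 * real n + 1)) \<longlonglongrightarrow> 1 / 2"
proof -
  have "(\<lambda>n. 1 / (2 + inverse (real (Suc n)))) \<longlonglongrightarrow> 1 / (2::real)"
    by (intro tendsto_intros LIMSEQ_inverse_real_of_nat_add[of 2]) auto
  moreover have "1 / (2 + inverse (real (Suc n))) = real (Suc n) / (2 * real (Suc n) + 1)" for n
    by (simp add: field_simps)
  ultimately have "(\<lambda>n. real (Suc n) / (2 * real (Suc n) + 1)) \<longlonglongrightarrow> 1 / 2"
    by simp
  then show ?thesis
    by (rule LIMSEQ_imp_Suc)
qed

lemma wallis_ratio_tendsto: "wallis_ratio \<longlonglongrightarrow> 1"
proof -
  define W where "W = (\<lambda>n. \<Prod>k=1..n. 4 * real k ^ 2 / (4 * real k ^ 2 - 1))"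
  have "4 * real k ^ 2 - 1 > 0" if "k \<ge> 1" for k
  proof -
    have "1 \<le> real k ^ 2"
      using that by (intro one_le_power) simp
    then show ?thesis by simp
  qed
  then have W_pos: "W n > 0" for n
    unfolding W_def by (intro prod_pos) auto
  have "W n = (\<Prod>k=1..n. 4 * real k ^ 2 / (4 * real k ^ 2 - 1))" for n
    by (simp add: W_def)
  then have "central_binom_prob n ^ 2 * ((2 * real n + 1) * W n) = 1" for n
    using central_binom_prob_wallis_prod[of n] by (simp add: mult.assoc)
  then have "central_binom_prob n ^ 2 = 1 / ((2 * real n + 1) * W n)" for n
    using W_pos[of n] by (simp add: eq_divide_eq)
  then have "wallis_ratio = (\<lambda>n. pi * (real n / (2 * real n + 1)) / W n)"
    by (simp add: wallis_ratio_def fun_eq_iff)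
  moreover from tendsto_divide[OF tendsto_mult[OF tendsto_const[of pi] LIMSEQ_n_over_2n_plus_1] wallis[folded W_def]]
  have "(\<lambda>n. pi * (real n / (2 * real n + 1)) / W n) \<longlonglongrightarrow> 1"
    by simp
  ultimately show ?thesis
    by simp
qed

lemma wallis_ratio_Suc:
  assumes "j \<ge> 1"
  shows "wallis_ratio (Suc j) = wallis_ratio j * (1 + 1 / (4 * real j * (real j + 1)))"
proof -
  have "wallis_ratio (Suc j)
      = pi * central_binom_prob j ^ 2 * ((real j + 1) * ((2 * real j + 1) / (2 * real j + 2)) ^ 2)"
    by (simp add: wallis_ratio_def central_binom_prob_Suc power_mult_distrib power_divide mult_ac)
  also have "(real j + 1) * ((2 * real j + 1) / (2 * real j + 2)) ^ 2
      = real j * (1 + 1 / (4 * real j * (real j + 1)))"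
    using assms by (simp add: divide_simps) (simp add: algebra_simps power2_eq_square)
  finally show ?thesis
    by (simp add: wallis_ratio_def mult_ac)
qed

lemma ln_add_one_lower_bound:
  assumes "(x::real) \<ge> 0"
  shows "x - x ^ 2 / 2 \<le> ln (1 + x)"
proof -
  let ?h = "\<lambda>y::real. ln (1 + y) - y + y ^ 2 / 2"
  have "?h 0 \<le> ?h x"
  proof (rule DERIV_nonneg_imp_nondecreasing[OF assms])
    fix y :: real
    assume y: "0 \<le> y" "y \<le> x"
    have "(?h has_real_derivative (y ^ 2 / (1 + y))) (at y)"
      using y by (auto intro!: derivative_eq_intros simp: field_simps power2_eq_square)
    then show "\<exists>d. (?h has_real_derivative d) (at y) \<and> d \<ge> 0"
      using y by auto
  qed
  then show ?thesis by simp
qed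

lemma wallis_ratio_lower:
  assumes "j \<ge> 1"
  shows "1 < wallis_ratio j * exp (1 / (4 * real j))"
proof -
  define L where "L n = wallis_ratio (Suc n) * exp (1 / (4 * (real n + 1)))" for n
  have step: "L (Suc n) < L n" for n
  proof -
    define y where "y = real (Suc n)"
    define x where "x = 1 / (4 * y * (y + 1))"
    have "y \<ge> 1" by (simp add: y_def)
    then have x: "x > 0" by (simp add: x_def)
    have "1 / (4 * y) = x + 1 / (4 * (y + 1))"
      unfolding x_def using \<open>y \<ge> 1\<close> by (simp add: divide_simps) (simp add: algebra_simps)
    then have "L n = wallis_ratio (Suc n) * exp x * exp (1 / (4 * (y + 1)))"
      by (simp add: L_def y_def exp_add add.commute)
    moreover have "L (Suc n) = wallis_ratio (Suc n) * (1 + x) * exp (1 / (4 * (y + 1)))"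
      using wallis_ratio_Suc[of "Suc n"] by (simp add: L_def x_def y_def add.commute)
    moreover have "1 + x < exp x"
      using ln_add_one_self_less_self[OF x] x
      by (metis add_pos_pos exp_less_cancel_iff exp_ln zero_less_one)
    ultimately show ?thesis
      using wallis_ratio_pos[of "Suc n"] by simp
  qed
  have "L = (\<lambda>n. wallis_ratio (Suc n) * exp (1 / 4 / (real n + 1)))"
    by (simp add: fun_eq_iff L_def)
  moreover have "(\<lambda>n. wallis_ratio (Suc n) * exp (1 / 4 / (real n + 1))) \<longlonglongrightarrow> 1 * exp 0"
    by (intro tendsto_intros LIMSEQ_Suc[OF wallis_ratio_tendsto] lim_const_over_Suc)
  ultimately have "L \<longlonglongrightarrow> 1"
    by simp
  then have "1 \<le> L n" for n
    using step by (intro decseq_ge) (auto intro: decseq_SucI less_imp_le)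
  moreover obtain n where "j = Suc n"
    using assms by (cases j) auto
  ultimately have "1 < L n"
    using step[of n] by (meson order.strict_trans1)
  then show ?thesis
    unfolding L_def \<open>j = Suc n\<close> by (simp add: add.commute)
qed

text \<open>The first two terms of Stirling's series
  \<open>ln (wallis_ratio j) = - 1/(4j) + 1/(96j\<^sup>3) + O(j\<^sup>-\<^sup>5)\<close>.\<close>

definition wallis_correction :: "real \<Rightarrow> real" where
  "wallis_correction j = 1 / (8 * j) - 1 / (192 * j ^ 3)"

lemma wallis_correction_step:
  assumes "(j::real) \<ge> 1"
  shows "2 * wallis_correction j - 2 * wallis_correction (j + 1)
           \<le> 1 / (4 * j * (j + 1)) - (1 / (4 * j * (j + 1))) ^ 2 / 2"
proof -
  have "2 * wallis_correction j - 2 * wallis_correction (j + 1)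
      = (1 / (4 * j) - 1 / (4 * (j + 1))) - (1 / j ^ 3 - 1 / (j + 1) ^ 3) / 96"
    using assms unfolding wallis_correction_def by (simp add: divide_simps) algebra
  also have "1 / (4 * j) - 1 / (4 * (j + 1)) = 1 / (4 * j * (j + 1))"
    using assms by (simp add: field_simps)
  also have "1 / j ^ 3 - 1 / (j + 1) ^ 3 = (3 * j ^ 2 + 3 * j + 1) / (j ^ 3 * (j + 1) ^ 3)"
    using assms by (simp add: field_simps) (simp add: power3_eq_cube power2_eq_square algebra_simps)
  also have "1 / (4 * j * (j + 1)) - (3 * j ^ 2 + 3 * j + 1) / (j ^ 3 * (j + 1) ^ 3) / 96
      \<le> 1 / (4 * j * (j + 1)) - (3 * j ^ 2 + 3 * j) / (j ^ 3 * (j + 1) ^ 3) / 96"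
    using divide_right_mono[of "3 * j ^ 2 + 3 * j" "3 * j ^ 2 + 3 * j + 1" "j ^ 3 * (j + 1) ^ 3"] assms
    by simp
  also have "(3 * j ^ 2 + 3 * j) / (j ^ 3 * (j + 1) ^ 3) / 96 = (1 / (4 * j * (j + 1))) ^ 2 / 2"
    using assms by (simp add: divide_simps) algebra
  finally show ?thesis .
qed

lemma wallis_ratio_upper:
  assumes "j \<ge> 1"
  shows "wallis_ratio j * exp (2 * wallis_correction (real j)) \<le> 1"
proof -
  define U where "U n = wallis_ratio (Suc n) * exp (2 * wallis_correction (real n + 1))" for n
  have "U n \<le> U (Suc n)" for n
  proof -
    define y where "y = real (Suc n)"
    define x where "x = 1 / (4 * y * (y + 1))"
    have "y \<ge> 1" by (simp add: y_def)
    then have x: "x > 0" by (simp add: x_def)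
    have "2 * wallis_correction y - 2 * wallis_correction (y + 1) \<le> x - x ^ 2 / 2"
      using wallis_correction_step[OF \<open>y \<ge> 1\<close>] unfolding x_def .
    then have "2 * wallis_correction y \<le> ln (1 + x) + 2 * wallis_correction (y + 1)"
      using ln_add_one_lower_bound[of x] x by linarith
    then have "exp (2 * wallis_correction y) \<le> (1 + x) * exp (2 * wallis_correction (y + 1))"
      using x by (metis exp_add exp_le_cancel_iff exp_ln add_pos_pos zero_less_one)
    moreover have "U (Suc n) = wallis_ratio (Suc n) * ((1 + x) * exp (2 * wallis_correction (y + 1)))"
      using wallis_ratio_Suc[of "Suc n"] by (simp add: U_def x_def y_def add.commute)
    ultimately show ?thesis
      using wallis_ratio_pos[of "Suc n"] by (simp add: U_def y_def add.commute)
  qed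
  moreover have "U \<longlonglongrightarrow> 1"
  proof -
    have "(\<lambda>n. 1 / 192 / (real n + 1) * (1 / (real n + 1)) * (1 / (real n + 1))) \<longlonglongrightarrow> (0::real) * 0 * 0"
      by (intro tendsto_intros lim_const_over_Suc)
    then have "(\<lambda>n. 1 / (192 * (real n + 1) ^ 3)) \<longlonglongrightarrow> (0::real)"
      by (simp add: power3_eq_cube algebra_simps)
    then have "(\<lambda>n. wallis_ratio (Suc n) * exp (2 * (1 / 8 / (real n + 1) - 1 / (192 * (real n + 1) ^ 3))))
        \<longlonglongrightarrow> 1 * exp (2 * (0 - 0))"
      by (intro tendsto_intros LIMSEQ_Suc[OF wallis_ratio_tendsto] lim_const_over_Suc)
    moreover have "U = (\<lambda>n. wallis_ratio (Suc n) * exp (2 * (1 / 8 / (real n + 1) - 1 / (192 * (real n + 1) ^ 3))))"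
      by (simp add: fun_eq_iff U_def wallis_correction_def)
    ultimately show ?thesis
      by simp
  qed
  ultimately have "U n \<le> 1" for n
    by (intro incseq_le) (auto intro: incseq_SucI)
  moreover obtain n where "j = Suc n"
    using assms by (cases j) auto
  ultimately show ?thesis
    by (simp add: U_def add.commute)
qed

lemma sqrt_wallis_ratio_lower:
  assumes "j \<ge> 1"
  shows "exp (- 1 / (8 * real j)) < sqrt (wallis_ratio j)"
proof -
  have "exp (- 1 / (8 * real j)) ^ 2 = 1 / exp (1 / (4 * real j))"
    by (simp add: power2_eq_square exp_add[symmetric] exp_minus inverse_eq_divide)
  also have "\<dots> < wallis_ratio j"
    using wallis_ratio_lower[OF assms] by (simp add: divide_less_eq)
  finally show ?thesis
    by (rule real_less_rsqrt)
qed

lemma sqrt_wallis_ratio_upper: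
  assumes "j \<ge> 1"
  shows "sqrt (wallis_ratio j) \<le> exp (- 23 / (192 * real j))"
proof -
  have "real j * 1 \<le> real j * real j ^ 2"
    using assms one_le_power[of "real j" 2] by (intro mult_left_mono) auto
  then have "1 / (192 * real j ^ 3) \<le> 1 / (192 * real j)"
    using assms by (intro divide_left_mono) (auto simp: power2_eq_square power3_eq_cube)
  then have correction: "23 / (192 * real j) \<le> wallis_correction (real j)"
    by (simp add: wallis_correction_def)
  have "wallis_ratio j \<le> 1 / exp (2 * wallis_correction (real j))"
    using wallis_ratio_upper[OF assms] by (simp add: le_divide_eq)
  also have "\<dots> = exp (- wallis_correction (real j)) ^ 2"
    by (simp add: power2_eq_square exp_add[symmetric] exp_minus inverse_eq_divide)
  finally have "sqrt (wallis_ratio j) \<le> exp (- wallis_correction (real j))"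
    by (simp add: real_le_lsqrt real_sqrt_le_iff)
  also have "\<dots> \<le> exp (- 23 / (192 * real j))"
    using correction by simp
  finally show ?thesis .
qed

lemma central_binom_ratio_eq:
  assumes "1 \<le> k" "k < R"
  shows "real ((2 * k) choose k) * real ((2 * (R - k)) choose (R - k)) / real ((2 * R) choose R)
       = sqrt (wallis_ratio k) * sqrt (wallis_ratio (R - k)) / sqrt (wallis_ratio R)
         * sqrt (real R / (pi * real k * (real R - real k)))"
proof -
  have choose_eq: "real ((2 * j) choose j) = 4 ^ j * (sqrt (wallis_ratio j) / sqrt (pi * real j))"
    if "j \<ge> 1" for j
    using that central_binom_prob_pos[of j]
    by (simp add: wallis_ratio_def central_binom_prob_def real_sqrt_mult)
  have powers: "(4::real) ^ k * 4 ^ (R - k) = 4 ^ R"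
    using assms by (simp add: power_add[symmetric])
  have "real ((2 * k) choose k) * real ((2 * (R - k)) choose (R - k)) / real ((2 * R) choose R)
      = (4 ^ k * (sqrt (wallis_ratio k) / sqrt (pi * real k)))
        * (4 ^ (R - k) * (sqrt (wallis_ratio (R - k)) / sqrt (pi * real (R - k))))
        / (4 ^ R * (sqrt (wallis_ratio R) / sqrt (pi * real R)))"
    using assms by (simp add: choose_eq)
  also have "\<dots> = sqrt (wallis_ratio k) * sqrt (wallis_ratio (R - k)) / sqrt (wallis_ratio R)
        * (sqrt (pi * real R) / (sqrt (pi * real k) * sqrt (pi * real (R - k))))"
    using assms wallis_ratio_pos[of R] powers by (simp add: field_simps)
  also have "sqrt (pi * real R) / (sqrt (pi * real k) * sqrt (pi * real (R - k)))
      = sqrt (real R / (pi * real k * (real R - real k)))"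
    using assms by (simp add: real_sqrt_mult[symmetric] real_sqrt_divide[symmetric] of_nat_diff)
  finally show ?thesis .
qed

lemma sqrt_wallis_ratio_quotient_bounds:
  assumes "1 \<le> k" "k < R"
  defines "q \<equiv> sqrt (wallis_ratio k) * sqrt (wallis_ratio (R - k)) / sqrt (wallis_ratio R)"
  shows "exp (- 1 / (8 * real k)) * exp (- 1 / (8 * real (R - k))) / exp (- 23 / (192 * real R)) < q"
    and "q < exp (- 23 / (192 * real k)) * exp (- 23 / (192 * real (R - k))) / exp (- 1 / (8 * real R))"
proof -
  have pos: "sqrt (wallis_ratio j) > 0" if "j \<ge> 1" for j
    using wallis_ratio_pos[OF that] by simp
  have "1 \<le> R - k"
    using assms by arith
  show "exp (- 1 / (8 * real k)) * exp (- 1 / (8 * real (R - k))) / exp (- 23 / (192 * real R)) < q"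
    unfolding q_def using assms
    by (intro frac_less mult_strict_mono sqrt_wallis_ratio_lower sqrt_wallis_ratio_upper pos) simp_all
  show "q < exp (- 23 / (192 * real k)) * exp (- 23 / (192 * real (R - k))) / exp (- 1 / (8 * real R))"
    unfolding q_def using assms less_imp_le[OF wallis_ratio_pos[OF \<open>1 \<le> R - k\<close>]]
    by (intro frac_less2 mult_mono sqrt_wallis_ratio_lower sqrt_wallis_ratio_upper pos mult_pos_pos) simp_all
qed

lemma central_binom_ratio_bounds:
  fixes k R :: nat
  assumes "1 \<le> k" "k < R" and v_def: "v = real k * (real R - real k) / (2 * real R)"
  shows "1 / (sqrt v * sqrt (2 * pi)) * exp (23 / (192 * real R) - 1 / (16 * v))
           < real ((2 * k) choose k) * real ((2 * (R - k)) choose (R - k)) / real ((2 * R) choose R)"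
    and "real ((2 * k) choose k) * real ((2 * (R - k)) choose (R - k)) / real ((2 * R) choose R)
           < 1 / (sqrt v * sqrt (2 * pi)) * exp (1 / (8 * real R) - 23 / (384 * v))"
proof -
  define K where "K = real k"
  define M where "M = real R - real k"
  define q where "q = sqrt (wallis_ratio k) * sqrt (wallis_ratio (R - k)) / sqrt (wallis_ratio R)"
  have K: "K \<ge> 1" and M: "M \<ge> 1" and RKM: "real R = K + M" and "real (R - k) = M"
    using assms by (auto simp: K_def M_def of_nat_diff)
  have v: "v = K * M / (2 * (K + M))"
    by (simp add: v_def K_def M_def)
  have "v * (2 * pi) = pi * K * M / (K + M)"
    using K M by (simp add: v field_simps)
  then have "sqrt (real R / (pi * real k * (real R - real k))) = 1 / sqrt (v * (2 * pi))"
    using RKM by (simp add: K_def[symmetric] M_def[symmetric] real_sqrt_divide)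
  then have ratio: "real ((2 * k) choose k) * real ((2 * (R - k)) choose (R - k)) / real ((2 * R) choose R)
      = q * (1 / (sqrt v * sqrt (2 * pi)))"
    unfolding central_binom_ratio_eq[OF assms(1,2)] q_def by (simp add: real_sqrt_mult)
  have C: "1 / (sqrt v * sqrt (2 * pi)) > 0"
    using K M by (simp add: v)
  have e16: "1 / (16 * v) = 1 / (8 * K) + 1 / (8 * M)"
    and e384: "23 / (384 * v) = 23 / (192 * K) + 23 / (192 * M)"
    using K M by (simp_all add: v field_simps)
  have "exp (23 / (192 * real R) - 1 / (16 * v)) = exp (- 1 / (8 * K)) * exp (- 1 / (8 * M)) / exp (- 23 / (192 * real R))"
    unfolding e16 by (simp add: exp_diff exp_add exp_minus inverse_eq_divide)
  moreover have "exp (1 / (8 * real R) - 23 / (384 * v)) = exp (- 23 / (192 * K)) * exp (- 23 / (192 * M)) / exp (- 1 / (8 * real R))"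
    unfolding e384 by (simp add: exp_diff exp_add exp_minus inverse_eq_divide)
  ultimately have "exp (23 / (192 * real R) - 1 / (16 * v)) < q" "q < exp (1 / (8 * real R) - 23 / (384 * v))"
    using sqrt_wallis_ratio_quotient_bounds[OF assms(1,2)] \<open>real (R - k) = M\<close>
    by (simp_all add: q_def K_def)
  then show "1 / (sqrt v * sqrt (2 * pi)) * exp (23 / (192 * real R) - 1 / (16 * v))
           < real ((2 * k) choose k) * real ((2 * (R - k)) choose (R - k)) / real ((2 * R) choose R)"
    and "real ((2 * k) choose k) * real ((2 * (R - k)) choose (R - k)) / real ((2 * R) choose R)
           < 1 / (sqrt v * sqrt (2 * pi)) * exp (1 / (8 * real R) - 23 / (384 * v))"
    unfolding ratio using C by (simp_all add: mult.commute divide_strict_right_mono)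
qed

lemma product_over_sum_bounds:
  fixes k R :: real
  assumes "1 \<le> k" "k + 1 \<le> R"
  shows "1 / 4 \<le> k * (R - k) / (2 * R)" and "k * (R - k) / (2 * R) \<le> R / 8"
proof -
  have "k \<le> k * (R - k)"
    using assms mult_left_mono[of 1 "R - k" k] by simp
  moreover have "R - k \<le> k * (R - k)"
    using assms mult_right_mono[of 1 k "R - k"] by simp
  ultimately have "k + (R - k) \<le> 2 * (k * (R - k))"
    by linarith
  then show "1 / 4 \<le> k * (R - k) / (2 * R)"
    using assms by (simp add: field_simps)
  have "4 * (k * (R - k)) \<le> R * R"
    using zero_le_power2[of "k - (R - k)"] by (simp add: power2_eq_square algebra_simps)
  then show "k * (R - k) / (2 * R) \<le> R / 8"
    using assms by (simp add: field_simps)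
qed

lemma exp_neg_inverse_variance_lt:
  fixes v R :: real
  assumes "R \<ge> 2" "0 < v" "v \<le> R / 8"
  shows "exp (- 1 / (24 * v)) * sqrt (2 * R / (2 * R - 1)) < 1"
proof -
  have "1 / (3 * R) \<le> 1 / (24 * v)"
    using assms by (intro divide_left_mono) auto
  then have "exp (- 1 / (24 * v)) \<le> exp (- 1 / (3 * R))"
    by simp
  also have "\<dots> = 1 / exp (1 / (3 * R))"
    by (simp add: exp_minus inverse_eq_divide)
  also have "\<dots> \<le> 1 / (1 + 1 / (3 * R))"
    using assms by (intro divide_left_mono exp_ge_add_one_self mult_pos_pos exp_gt_zero add_pos_pos) auto
  also have "\<dots> = 3 * R / (3 * R + 1)"
    using assms by (simp add: field_simps)
  also have "\<dots> < sqrt ((2 * R - 1) / (2 * R))"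
  proof (rule real_less_rsqrt)
    have "2 * R \<le> R * R"
      using assms by (simp add: mult_right_mono)
    then have "3 * R ^ 2 - 4 * R - 1 > 0"
      using assms unfolding power2_eq_square by linarith
    then have "(3 * R) ^ 2 * (2 * R) < (2 * R - 1) * (3 * R + 1) ^ 2"
      by (simp add: power2_eq_square algebra_simps)
    then show "(3 * R / (3 * R + 1)) ^ 2 < (2 * R - 1) / (2 * R)"
      using assms by (simp add: divide_simps power_divide)
  qed
  also have "\<dots> = 1 / sqrt (2 * R / (2 * R - 1))"
    by (simp add: real_sqrt_divide)
  finally show ?thesis
    using assms by (simp add: divide_simps)
qed

lemma scaled_exp_comparisons:
  fixes v R :: real
  assumes "R \<ge> 2" "0 < v" "v \<le> R / 8"
  defines "C \<equiv> 1 / (sqrt v * sqrt (2 * pi))"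
  shows "C * exp (- 1 / (16 * v)) < C * exp (23 / (192 * R) - 1 / (16 * v))"
    and "C * exp (1 / (8 * R) - 23 / (384 * v)) < C * exp (- 1 / (24 * v))"
    and "C * exp (- 1 / (24 * v)) < C / sqrt (2 * R / (2 * R - 1))"
proof -
  have C: "C > 0"
    using assms by (simp add: C_def)
  have "exp (- 1 / (16 * v)) < exp (23 / (192 * R) - 1 / (16 * v))"
    using assms by simp
  then show "C * exp (- 1 / (16 * v)) < C * exp (23 / (192 * R) - 1 / (16 * v))"
    using C by (rule mult_strict_left_mono)
  have "1 / (8 * R) \<le> 1 / (64 * v)"
    using assms by (intro divide_left_mono) auto
  moreover have "1 / (64 * v) < 23 / (384 * v) - 1 / (24 * v)"
    using assms by (simp add: field_simps)
  ultimately have "exp (1 / (8 * R) - 23 / (384 * v)) < exp (- 1 / (24 * v))"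
    by simp
  then show "C * exp (1 / (8 * R) - 23 / (384 * v)) < C * exp (- 1 / (24 * v))"
    using C by (rule mult_strict_left_mono)
  have "sqrt (2 * R / (2 * R - 1)) > 0"
    using assms by simp
  then show "C * exp (- 1 / (24 * v)) < C / sqrt (2 * R / (2 * R - 1))"
    using mult_strict_left_mono[OF exp_neg_inverse_variance_lt[OF assms(1-3)] C]
    by (simp add: pos_less_divide_eq mult.assoc)
qed

theorem lemma4p3:
  fixes m rd bl :: nat and n :: int
  defines "N \<equiv> rd + bl"
  defines "f \<equiv> hyp_pmf m rd bl"
  defines "\<sigma> \<equiv> sqrt (hyp_var m rd bl)"
  defines "\<sigma>0 \<equiv> sqrt ((real N - 1) / real N * \<sigma>^2)"
  defines "r \<equiv> real N / 2"
  assumes hm: "m \<le> N"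
    and mean: "hyp_mean m rd bl = real_of_int n / 2"
    and symm: "\<forall>j::int. f j = f (n - j)"
    and sigpos: "\<sigma> > 0"
    and neven: "even n"
  shows "let k = n div 2 in
     n = 2 * k \<and> 1 \<le> k \<and> real_of_int k \<le> r - 1 \<and> r \<ge> 2 \<and>
     1/4 \<le> \<sigma>0^2 \<and> \<sigma>0^2 = real_of_int k * (r - real_of_int k) / (2 * r) \<and> \<sigma>0^2 \<le> r / 8 \<and>
     \<sigma> = sqrt (2 * r / (2 * r - 1)) * \<sigma>0 \<and>
     f k > 1 / (\<sigma>0 * sqrt (2 * pi)) * exp (23 / (192 * r) - 1 / (16 * \<sigma>0^2)) \<and>
     1 / (\<sigma>0 * sqrt (2 * pi)) * exp (23 / (192 * r) - 1 / (16 * \<sigma>0^2))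
       > 1 / (\<sigma>0 * sqrt (2 * pi)) * exp (- 1 / (16 * \<sigma>0^2)) \<and>
     f k < 1 / (\<sigma>0 * sqrt (2 * pi)) * exp (1 / (8 * r) - 23 / (384 * \<sigma>0^2)) \<and>
     1 / (\<sigma>0 * sqrt (2 * pi)) * exp (1 / (8 * r) - 23 / (384 * \<sigma>0^2))
       < 1 / (\<sigma>0 * sqrt (2 * pi)) * exp (- 1 / (24 * \<sigma>0^2)) \<and>
     1 / (\<sigma>0 * sqrt (2 * pi)) * exp (- 1 / (24 * \<sigma>0^2)) < 1 / (\<sigma> * sqrt (2 * pi))"
proof -
  obtain k R where k: "n = 2 * int k" "1 \<le> k" "k < R"
    and shape: "(rd = R \<and> bl = R \<and> m = 2 * k) \<or> (rd = 2 * k \<and> bl = 2 * (R - k) \<and> m = R)"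
    using symmetric_hyp_even_shapes[of m rd bl n] hm mean symm sigpos neven
    unfolding N_def f_def \<sigma>_def by auto
  have NR: "N = 2 * R"
    using shape k by (auto simp: N_def)
  have fk: "f (int k) = real ((2 * k) choose k) * real ((2 * (R - k)) choose (R - k)) / real ((2 * R) choose R)"
    using hyp_pmf_mode_of_shape[OF k(3) shape] by (simp add: f_def)
  have var: "hyp_var m rd bl = real k * (real R - real k) / (2 * real R - 1)"
    using hyp_var_of_shape[OF k(3) shape] .
  define v where "v = real k * (real R - real k) / (2 * real R)"
  have v_bounds: "1 / 4 \<le> v" "v \<le> real R / 8"
    using product_over_sum_bounds[of "real k" "real R"] k by (auto simp: v_def)
  have R: "real R \<ge> 2" "r = real R"
    using k by (auto simp: r_def NR)
  have var_v: "hyp_var m rd bl = 2 * real R / (2 * real R - 1) * v"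
    using R(1) by (simp add: var v_def divide_simps)
  have "hyp_var m rd bl > 0"
    using sigpos by (simp add: \<sigma>_def)
  then have "\<sigma> ^ 2 = hyp_var m rd bl"
    by (simp add: \<sigma>_def)
  then have "(real N - 1) / real N * \<sigma> ^ 2
      = (2 * real R - 1) / (2 * real R) * (2 * real R / (2 * real R - 1) * v)"
    unfolding var_v NR by simp
  also have "\<dots> = v"
    using R(1) by (simp add: field_simps)
  finally have \<sigma>0: "\<sigma>0 = sqrt v"
    unfolding \<sigma>0_def by (rule arg_cong)
  have \<sigma>0_sq: "\<sigma>0 ^ 2 = v"
    using v_bounds by (simp add: \<sigma>0)
  have \<sigma>: "\<sigma> = sqrt (2 * real R / (2 * real R - 1)) * sqrt v"
    by (simp only: \<sigma>_def var_v real_sqrt_mult)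
  have inv_\<sigma>: "1 / (\<sigma> * sqrt (2 * pi)) = 1 / (sqrt v * sqrt (2 * pi)) / sqrt (2 * real R / (2 * real R - 1))"
    by (simp add: \<sigma>)
  have "n div 2 = int k" "real k + 1 \<le> real R"
    using k by auto
  then show ?thesis
    using central_binom_ratio_bounds[OF k(2,3) v_def] scaled_exp_comparisons[of "real R" v] k v_bounds R fk \<sigma>
    unfolding Let_def inv_\<sigma> \<sigma>0_sq \<sigma>0 R(2) by (simp add: v_def[symmetric])
qed

end
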